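(* Consider the following transmitter-pulse/receiver selection setting. There are $I$ transmitters, each able to transmit $P$ pulses, and $R$ receivers. Let $\mathcal{P}=\{a_{i,p}: 1\le i\le I,\ 1\le p\le P\}$ be the set of all $IP$ transmitter-pulses, $\mathcal{R}=\{b_1,\dots,b_R\}$ the set of all receivers, and $\mathcal{U}=\mathcal{P}\cup\mathcal{R}$ the ground set. For every receiver $r$, transmitter $i$, pulse $p$ and sample index $n\in\{1,\dots,N\}$ let $\partial y_{r,i,p}[n]\in\mathbb{C}^4$ be the vector defined in the context below (for fixed values of the unknown parameters). For $\mathcal{S}\subseteq\mathcal{U}$ write $\mathcal{A}=\mathcal{S}\cap\mathcal{P}$, $\mathcal{B}=\mathcal{S}\cap\mathcal{R}$ and let $\mathcal{Y}(\mathcal{S})=\{(r,i,p): b_r\in\mathcal{B},\ a_{i,p}\in\mathcal{A}\}$ be the set of measurement indices generated by $\mathcal{S}$. Define the modified frame potential $$\tilde{\mathrm{FP}}(\mathcal{S})=\sum_{y,y'\in\mathcal{Y}(\mathcal{S})}\sum_{n=1}^N\left|\frac{\langle\partial y[n],\partial y'[n]\rangle}{\langle\partial y[n],\partial y[n]\rangle\,\langle\partial y'[n],\partial y'[n]\rangle}\right|^2,$$ where the sum runs over all ordered pairs $(y,y')$ of elements of $\mathcal{Y}(\mathcal{S})$ and $\langle\mathbf{a},\mathbf{b}\rangle=\mathbf{a}^H\mathbf{b}$, and define the set function $G:2^{\mathcal{U}}\to\mathbb{R}_+$ by $G(\mathcal{X})=\tilde{\mathrm{FP}}(\mathcal{U})-\tilde{\mathrm{FP}}(\mathcal{U}\setminus\mathcal{X})$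 for $\mathcal{X}\subseteq\mathcal{U}$. Then $G$ is normalized ($G(\emptyset)=0$), monotone (nondecreasing with respect to inclusion), and submodular, i.e. $G(\mathcal{S}_1\cup\{u\})-G(\mathcal{S}_1)\ge G(\mathcal{S}_2\cup\{u\})-G(\mathcal{S}_2)$ for all $\mathcal{S}_1\subseteq\mathcal{S}_2\subseteq\mathcal{U}$ and $u\in\mathcal{U}\setminus\mathcal{S}_2$.
   Context: Colocated MIMO radar model with two targets. Receiver $r$ is at position $d_r$ and transmitter $i$ at position $d_i$ on a line; $\lambda$ is the wavelength, $f_c$ the carrier frequency, $c$ the speed of light, $T_P$ the pulse repetition interval, $T_s$ the sampling period, $k$ the LFM chirp rate. Target $q\in\{1,2\}$ has complex amplitude $\alpha_q\neq 0$, range $R_q$, direction cosine $u_q$ and radial velocity $v_q$; these parameters are fixed. Let $h(t;v)=\exp(j4\pi v t/\lambda)$, $\beta_q(t)=\exp(j4\pi k t R_q/c)$, $\tau_{i,q,r}=c^{-1}[2R_q-(d_i+d_r)u_q]$, $\phi_{r,i}(u_q)=\exp(-j2\pi f_c\tau_{i,q,r})$, and $y^{(q)}_{r,i,p}[n]=\alpha_q h(pT_P+nT_s;v_q)\beta_q(nT_s)\phi_{r,i}(u_q)$. The noiseless measurement is $y_{r,i,p}[n]=y^{(1)}_{r,i,p}[n]+y^{(2)}_{r,i,p}[n]$, and its derivative with respect to $\boldsymbol\theta=[u_1,v_1,u_2,v_2]^T$ is $$\partial y_{r,i,p}[n]=\frac{j2\pi}{\lambda}\big((d_i+d_r)y^{(1)}_{r,i,p}[n],\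 2(nT_s+pT_P)y^{(1)}_{r,i,p}[n],\ (d_i+d_r)y^{(2)}_{r,i,p}[n],\ 2(nT_s+pT_P)y^{(2)}_{r,i,p}[n]\big)^T\in\mathbb{C}^4.$$ In the definition of $\tilde{\mathrm{FP}}$, $\partial y[n]$ denotes $\partial y_{r,i,p}[n]$ for the index $y=(r,i,p)$. *)

theory Defs
  imports Complex_Main
begin

text \<open>Physical parameters of the colocated MIMO radar model (two targets, q = 1, 2).\<close>
record radar =
  drx   :: "nat \<Rightarrow> real"      (* receiver positions d_r *)
  dtx   :: "nat \<Rightarrow> real"      (* transmitter positions d_i *)
  lam   :: real
  fcar  :: real
  clight :: real
  TP    :: real                (* pulse repetition interval T_P *)
  Ts    :: real                (* sampling period T_s *)
  chirp :: real                (* LFM chirp rate k *)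
  alpha :: "nat \<Rightarrow> complex"   (* target amplitudes alpha_q *)
  Rng   :: "nat \<Rightarrow> real"
  ucos  :: "nat \<Rightarrow> real"      (* direction cosines u_q *)
  vel   :: "nat \<Rightarrow> real"

definition hfun :: "radar \<Rightarrow> real \<Rightarrow> real \<Rightarrow> complex" where
  "hfun M t v = exp (\<i> * of_real (4 * pi * v * t / lam M))"

definition betaf :: "radar \<Rightarrow> nat \<Rightarrow> real \<Rightarrow> complex" where
  "betaf M q t = exp (\<i> * of_real (4 * pi * chirp M * t * Rng M q / clight M))"

definition tau :: "radar \<Rightarrow> nat \<Rightarrow> nat \<Rightarrow> nat \<Rightarrow> real" where
  "tau M i q r = (2 * Rng M q - (dtx M i + drx M r) * ucos M q) / clight M"

definition phif :: "radar \<Rightarrow> nat \<Rightarrow> nat \<Rightarrow> nat \<Rightarrow> complex" where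
  "phif M r i q = exp (- \<i> * of_real (2 * pi * fcar M * tau M i q r))"

text \<open>Single-target noiseless measurement y^(q)_{r,i,p}[n].\<close>
definition yq :: "radar \<Rightarrow> nat \<Rightarrow> nat \<Rightarrow> nat \<Rightarrow> nat \<Rightarrow> nat \<Rightarrow> complex" where
  "yq M q r i p n = alpha M q * hfun M (real p * TP M + real n * Ts M) (vel M q)
                    * betaf M q (real n * Ts M) * phif M r i q"

text \<open>Derivative vector \<partial>y_{r,i,p}[n] in C^4, components indexed 0..3.\<close>
definition dy :: "radar \<Rightarrow> nat \<times> nat \<times> nat \<Rightarrow> nat \<Rightarrow> nat \<Rightarrow> complex" where
  "dy M y n k = (case y of (r, i, p) \<Rightarrow>
     (\<i> * of_real (2 * pi / lam M)) *
     (if k = 0 then of_real (dtx M i + drx M r) * yq M 1 r i p n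
      else if k = 1 then of_real (2 * (real n * Ts M + real p * TP M)) * yq M 1 r i p n
      else if k = 2 then of_real (dtx M i + drx M r) * yq M 2 r i p n
      else if k = 3 then of_real (2 * (real n * Ts M + real p * TP M)) * yq M 2 r i p n
      else 0))"

definition cinner4 :: "(nat \<Rightarrow> complex) \<Rightarrow> (nat \<Rightarrow> complex) \<Rightarrow> complex" where
  "cinner4 a b = (\<Sum>k<4. cnj (a k) * b k)"

text \<open>Ground set elements: transmitter-pulses a_{i,p} and receivers b_r.\<close>
datatype elem = Pulse nat nat | Recv nat

definition pulses :: "nat \<Rightarrow> nat \<Rightarrow> elem set" where
  "pulses I P = {Pulse i p | i p. 1 \<le> i \<and> i \<le> I \<and> 1 \<le> p \<and> p \<le> P}"

definition receivers :: "nat \<Rightarrow> elem set" where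
  "receivers R = {Recv r | r. 1 \<le> r \<and> r \<le> R}"

definition ground :: "nat \<Rightarrow> nat \<Rightarrow> nat \<Rightarrow> elem set" where
  "ground I P R = pulses I P \<union> receivers R"

definition Yset :: "nat \<Rightarrow> nat \<Rightarrow> nat \<Rightarrow> elem set \<Rightarrow> (nat \<times> nat \<times> nat) set" where
  "Yset I P R S = {(r, i, p) | r i p. Recv r \<in> S \<inter> receivers R \<and> Pulse i p \<in> S \<inter> pulses I P}"

definition FPt :: "radar \<Rightarrow> nat \<Rightarrow> nat \<Rightarrow> nat \<Rightarrow> nat \<Rightarrow> elem set \<Rightarrow> real" where
  "FPt M I P R N S = (\<Sum>(y, y') \<in> Yset I P R S \<times> Yset I P R S. \<Sum>n = 1..N.
      (cmod (cinner4 (dy M y n) (dy M y' n) /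
             (cinner4 (dy M y n) (dy M y n) * cinner4 (dy M y' n) (dy M y' n)))) ^ 2)"

definition Gfun :: "radar \<Rightarrow> nat \<Rightarrow> nat \<Rightarrow> nat \<Rightarrow> nat \<Rightarrow> elem set \<Rightarrow> real" where
  "Gfun M I P R N X = FPt M I P R N (ground I P R) - FPt M I P R N (ground I P R - X)"

end

theory Submission
  imports Defs
begin

text \<open>The frame potential is a sum of nonnegative weights over the pairs of measurement indices
  generated by a set. Adding an element \<open>u\<close> creates only indices involving \<open>u\<close>, so the pairs
  gained by adding \<open>u\<close> to a set are never already present in a larger set avoiding \<open>u\<close>: the
  increments of the frame potential grow with the set (supermodularity). The set function \<open>G\<close>
  is the complement dual of the frame potential, which turns monotonicity into monotonicity and
  supermodularity into submodularity. The weights are squared moduli, hence nonnegative even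
  when a denominator vanishes (division by zero yields 0).\<close>

lemma sum_pairs_increment_mono:
  fixes w :: "'b \<times> 'b \<Rightarrow> real"
  assumes nonneg: "\<And>z. w z \<ge> 0" and "finite Y'"
    and "X \<subseteq> X'" "Y \<subseteq> Y'" "X' \<subseteq> Y'"
    and fresh: "(X' - X) \<inter> Y = {}"
  shows "sum w (X' \<times> X') - sum w (X \<times> X) \<le> sum w (Y' \<times> Y') - sum w (Y \<times> Y)"
proof -
  have fin: "finite (Y' \<times> Y')" "finite (X' \<times> X')"
    using assms(2,5) finite_subset by blast+
  have gained: "X' \<times> X' - X \<times> X \<subseteq> Y' \<times> Y' - Y \<times> Y"
    using assms(5) fresh by blast
  have "X \<times> X \<subseteq> X' \<times> X'" "Y \<times> Y \<subseteq> Y' \<times> Y'"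
    using assms(3,4) by blast+
  note pair_diffs = sum_diff[OF fin(2) this(1)] sum_diff[OF fin(1) this(2)]
  have "sum w (X' \<times> X') - sum w (X \<times> X) = sum w (X' \<times> X' - X \<times> X)"
    by (simp add: pair_diffs)
  also have "\<dots> \<le> sum w (Y' \<times> Y' - Y \<times> Y)"
    using fin(1) gained nonneg by (intro sum_mono2) auto
  also have "\<dots> = sum w (Y' \<times> Y') - sum w (Y \<times> Y)"
    by (simp add: pair_diffs)
  finally show ?thesis .
qed

lemma finite_Yset: "finite (Yset I P R S)"
proof (rule finite_subset)
  show "Yset I P R S \<subseteq> {1..R} \<times> {1..I} \<times> {1..P}"
    by (auto simp: Yset_def receivers_def pulses_def)
qed simp

lemma Yset_mono: "S \<subseteq> T \<Longrightarrow> Yset I P R S \<subseteq> Yset I P R T"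
  by (auto simp: Yset_def)

lemma Yset_insert_fresh:
  "u \<notin> T \<Longrightarrow> (Yset I P R (insert u S) - Yset I P R S) \<inter> Yset I P R T = {}"
  by (auto simp: Yset_def)

definition frame_weight :: "radar \<Rightarrow> nat \<Rightarrow> (nat \<times> nat \<times> nat) \<times> (nat \<times> nat \<times> nat) \<Rightarrow> real"
  where "frame_weight M N = (\<lambda>(y, y'). \<Sum>n = 1..N.
      (cmod (cinner4 (dy M y n) (dy M y' n) /
             (cinner4 (dy M y n) (dy M y n) * cinner4 (dy M y' n) (dy M y' n)))) ^ 2)"

lemma frame_weight_nonneg: "frame_weight M N z \<ge> 0"
  unfolding frame_weight_def by (auto intro: sum_nonneg split: prod.splits)

lemma FPt_eq_sum_frame_weight:
  "FPt M I P R N S = sum (frame_weight M N) (Yset I P R S \<times> Yset I P R S)"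
  unfolding FPt_def frame_weight_def by simp

lemma FPt_mono: "S \<subseteq> T \<Longrightarrow> FPt M I P R N S \<le> FPt M I P R N T"
  unfolding FPt_eq_sum_frame_weight
  by (intro sum_mono2) (auto simp: finite_Yset frame_weight_nonneg dest: Yset_mono)

lemma FPt_increment_mono:
  assumes "S \<subseteq> T" "u \<notin> T"
  shows "FPt M I P R N (insert u S) - FPt M I P R N S
       \<le> FPt M I P R N (insert u T) - FPt M I P R N T"
  unfolding FPt_eq_sum_frame_weight
proof (rule sum_pairs_increment_mono)
  show "Yset I P R (insert u S) \<subseteq> Yset I P R (insert u T)"
    using assms(1) by (intro Yset_mono) blast
  show "Yset I P R S \<subseteq> Yset I P R (insert u S)" "Yset I P R T \<subseteq> Yset I P R (insert u T)"
    by (intro Yset_mono subset_insertI)+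
qed (use assms in \<open>auto simp: frame_weight_nonneg finite_Yset Yset_insert_fresh\<close>)

lemma complement_dual_increment_antimono:
  fixes F :: "'a set \<Rightarrow> real"
  assumes increment_mono: "\<And>S T u. S \<subseteq> T \<Longrightarrow> u \<notin> T \<Longrightarrow>
      F (insert u S) - F S \<le> F (insert u T) - F T"
    and "S1 \<subseteq> S2" "u \<in> U - S2"
  shows "F (U - S2) - F (U - insert u S2) \<le> F (U - S1) - F (U - insert u S1)"
proof -
  have "U - S2 = insert u (U - insert u S2)" "U - S1 = insert u (U - insert u S1)"
    using assms(2,3) by auto
  then show ?thesis
    using increment_mono[of "U - insert u S2" "U - insert u S1" u] assms(2) by auto
qed

theorem theorem1:
  fixes M :: radar and I P R N :: nat
  assumes "alpha M 1 \<noteq> 0" and "alpha M 2 \<noteq> 0"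
  shows "Gfun M I P R N {} = 0
    \<and> (\<forall>X. X \<subseteq> ground I P R \<longrightarrow> Gfun M I P R N X \<ge> 0)
    \<and> (\<forall>X Y. X \<subseteq> Y \<and> Y \<subseteq> ground I P R \<longrightarrow> Gfun M I P R N X \<le> Gfun M I P R N Y)
    \<and> (\<forall>S1 S2 u. S1 \<subseteq> S2 \<and> S2 \<subseteq> ground I P R \<and> u \<in> ground I P R - S2 \<longrightarrow>
           Gfun M I P R N (S1 \<union> {u}) - Gfun M I P R N S1
             \<ge> Gfun M I P R N (S2 \<union> {u}) - Gfun M I P R N S2)"
proof (intro conjI allI impI)
  show "Gfun M I P R N {} = 0" by (simp add: Gfun_def)
next
  fix X
  show "Gfun M I P R N X \<ge> 0"
    unfolding Gfun_def using FPt_mono[of "ground I P R - X" "ground I P R"] by auto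
next
  fix X Y assume "X \<subseteq> Y \<and> Y \<subseteq> ground I P R"
  then show "Gfun M I P R N X \<le> Gfun M I P R N Y"
    unfolding Gfun_def using FPt_mono[of "ground I P R - Y" "ground I P R - X"] by (simp add: Diff_mono)
next
  fix S1 S2 u assume "S1 \<subseteq> S2 \<and> S2 \<subseteq> ground I P R \<and> u \<in> ground I P R - S2"
  then show "Gfun M I P R N (S1 \<union> {u}) - Gfun M I P R N S1
           \<ge> Gfun M I P R N (S2 \<union> {u}) - Gfun M I P R N S2"
    using complement_dual_increment_antimono[where F = "FPt M I P R N" and U = "ground I P R",
          OF FPt_increment_mono]
    by (simp add: Gfun_def)
qed

end
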